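(* Let $P=\bigcup_{k=1}^{\infty}\{2^{2k-1},2^{2k-1}+1,\dots,2^{2k}-1\}$ and let $\Sigma_P=\{x\in\{0,1\}^{\mathbb{Z}_+}: x_i=x_j=1\Rightarrow |i-j|\in P\cup\{0\}\}$ with the shift $\sigma_P:\Sigma_P\to\Sigma_P$, $(\sigma_P x)_i=x_{i+1}$. Then $(\Sigma_P,\sigma_P)$ is $(2,3)$-transitive but not $(1,2)$-transitive, i.e. $(\Sigma_P\times\Sigma_P,\sigma_P^2\times\sigma_P^3)$ is transitive while $(\Sigma_P\times\Sigma_P,\sigma_P\times\sigma_P^2)$ is not.
   Context: $\mathbb{Z}_+=\{0,1,2,\dots\}$; $\{0,1\}^{\mathbb{Z}_+}$ carries the product topology. A dynamical system $(Y,g)$ ($Y$ compact metric, $g$ continuous) is transitive if for all non-empty open $U,V\subset Y$ there is $n\in\mathbb{N}$ with $U\cap g^{-n}(V)\ne\emptyset$. For $\mathbf{a}=(a_1,\dots,a_r)\in\mathbb{N}^r$, $(X,f)$ is $\mathbf{a}$-transitive if $(X^r,f^{a_1}\times\dots\times f^{a_r})$ is transitive. *)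

theory Defs
  imports "HOL-Analysis.Analysis"
begin

definition transitive_sys :: "'a topology \<Rightarrow> ('a \<Rightarrow> 'a) \<Rightarrow> bool" where
  "transitive_sys T g \<longleftrightarrow>
     (\<forall>U V. openin T U \<and> openin T V \<and> U \<noteq> {} \<and> V \<noteq> {} \<longrightarrow>
        (\<exists>n::nat. n \<ge> 1 \<and> U \<inter> {y \<in> topspace T. (g ^^ n) y \<in> V} \<noteq> {}))"

definition Pset :: "nat set" where
  "Pset = (\<Union>k\<in>{1..}. {2^(2*k-1) .. 2^(2*k) - 1})"

definition cantor_top :: "(nat \<Rightarrow> nat) topology" where
  "cantor_top = product_topology (\<lambda>_. discrete_topology {0,1}) UNIV"

definition SigmaP :: "(nat \<Rightarrow> nat) set" where
  "SigmaP = {x. (\<forall>i. x i \<in> {0,1}) \<and>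
      (\<forall>i j. x i = 1 \<and> x j = 1 \<longrightarrow> (max i j - min i j) \<in> Pset \<union> {0})}"

definition SigmaP_top :: "(nat \<Rightarrow> nat) topology" where
  "SigmaP_top = subtopology cantor_top SigmaP"

definition shift :: "(nat \<Rightarrow> nat) \<Rightarrow> (nat \<Rightarrow> nat)" where
  "shift x = (\<lambda>i. x (Suc i))"

end

theory Submission
  imports Defs
begin

text \<open>
  No \<open>n\<close> has both \<open>n\<close> and \<open>2n\<close> in \<open>P\<close>,
  so no point of the cylinder \<open>[1]\<close> can be brought back into \<open>[1]\<close> by \<open>\<sigma>\<^sup>n\<close> and by \<open>\<sigma>\<^sup>2\<^sup>n\<close> at
  once; this kills \<open>(1,2)\<close>-transitivity. For \<open>(2,3)\<close>-transitivity, given prefixes of length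
  \<open>L\<close> to be joined, take \<open>N = 4\<^sup>L\<close> and \<open>n = 5N\<close>: the target blocks are spliced in at positions
  \<open>2n = 10N\<close> and \<open>3n = 15N\<close>, and every gap created lies in the single block
  \<open>[8N, 16N) \<subseteq> P\<close>.
\<close>

lemma funpow_shift: "(shift ^^ k) x = (\<lambda>i. x (i + k))"
  by (induction k arbitrary: x) (auto simp: shift_def)

lemma funpow_split_prod:
  fixes f :: "'a \<Rightarrow> 'a" and h :: "'b \<Rightarrow> 'b"
  shows "((\<lambda>(x, y). (f x, h y)) ^^ n) = (\<lambda>(x, y). ((f ^^ n) x, (h ^^ n) y))"
  by (induction n) (auto simp: fun_eq_iff)

lemma mem_Pset_iff: "d \<in> Pset \<longleftrightarrow> (\<exists>j. 2 * 4^j \<le> d \<and> d < 4 * (4::nat)^j)"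
proof -
  have "{1..} = range Suc"
    by (auto simp: Suc_le_eq gr0_conv_Suc)
  then have Pset_eq: "Pset = (\<Union>j. {2^(2*Suc j-1) .. 2^(2*Suc j) - 1})"
    unfolding Pset_def by simp
  have block: "d \<in> {2^(2*Suc j-1) .. 2^(2*Suc j) - 1} \<longleftrightarrow> 2 * 4^j \<le> d \<and> d < 4 * (4::nat)^j"
    for j
  proof -
    have "2^(2*Suc j-1) = 2 * (4::nat)^j" "2^(2*Suc j) = 4 * (4::nat)^j"
      by (simp_all add: power_mult)
    moreover have "(0::nat) < 4^j" by simp
    ultimately show ?thesis unfolding atLeastAtMost_iff by arith
  qed
  show ?thesis by (simp only: Pset_eq UN_iff bex_UNIV block)
qed

lemma mem_Pset_if_bounds:
  assumes "8 * 4^j \<le> d" "d < 16 * (4::nat)^j"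
  shows "d \<in> Pset"
  using assms unfolding mem_Pset_iff by (intro exI[of _ "Suc j"]) simp

lemma Pset_not_double: "n \<in> Pset \<Longrightarrow> 2 * n \<notin> Pset"
proof
  assume "n \<in> Pset" "2 * n \<in> Pset"
  then obtain k j :: nat where k: "2 * 4^k \<le> n" "n < 4 * 4^k" and j: "4^j \<le> n" "n < 2 * 4^j"
    unfolding mem_Pset_iff by auto
  show False
  proof (cases "j \<le> k")
    case True
    then have "(4::nat)^j \<le> 4^k" by (intro power_increasing) auto
    with k j show False by linarith
  next
    case False
    then have "(4::nat)^Suc k \<le> 4^j" by (intro power_increasing) auto
    with k j show False by simp
  qed
qed

lemma mem_SigmaP_iff: "x \<in> SigmaP \<longleftrightarrow> (\<forall>i. x i \<in> {0,1}) \<and>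
   (\<forall>i j. i < j \<and> x i = 1 \<and> x j = 1 \<longrightarrow> j - i \<in> Pset)"
proof -
  have gap: "max i j - min i j \<in> Pset \<union> {0} \<longleftrightarrow>
      (i < j \<longrightarrow> j - i \<in> Pset) \<and> (j < i \<longrightarrow> i - j \<in> Pset)" for i j :: nat
    by (cases i j rule: linorder_cases) auto
  have "(\<forall>i j. x i = 1 \<and> x j = 1 \<longrightarrow> (i < j \<longrightarrow> j - i \<in> Pset) \<and> (j < i \<longrightarrow> i - j \<in> Pset))
    \<longleftrightarrow> (\<forall>i j. i < j \<and> x i = 1 \<and> x j = 1 \<longrightarrow> j - i \<in> Pset)"
    by meson
  then show ?thesis
    unfolding SigmaP_def mem_Collect_eq gap by simp
qed

lemma SigmaP_gap: "x \<in> SigmaP \<Longrightarrow> i < j \<Longrightarrow> x i = 1 \<Longrightarrow> x j = 1 \<Longrightarrow> j - i \<in> Pset"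
  by (simp add: mem_SigmaP_iff)

lemma funpow_shift_in_SigmaP: "x \<in> SigmaP \<Longrightarrow> (shift ^^ k) x \<in> SigmaP"
  unfolding mem_SigmaP_iff funpow_shift
  by (metis add_diff_cancel_right add_less_cancel_right)

lemma topspace_SigmaP_top [simp]: "topspace SigmaP_top = SigmaP"
  unfolding SigmaP_top_def cantor_top_def SigmaP_def
  by (auto simp: PiE_UNIV_domain Pi_def)

lemma openin_product_discrete_prefix:
  assumes "openin (product_topology (\<lambda>_::nat. discrete_topology A) UNIV) T" "z \<in> T"
  shows "\<exists>L. \<forall>x\<in>topspace (product_topology (\<lambda>_. discrete_topology A) UNIV).
           (\<forall>i<L. x i = z i) \<longrightarrow> x \<in> T"
proof -
  obtain U where U: "finite {i. U i \<noteq> A}" "z \<in> Pi\<^sub>E UNIV U" "Pi\<^sub>E UNIV U \<subseteq> T"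
    using assms unfolding openin_product_topology_alt by auto
  then obtain L where L: "\<And>i. U i \<noteq> A \<Longrightarrow> i < L"
    unfolding finite_nat_set_iff_bounded by blast
  have "x \<in> T" if "\<forall>i. x i \<in> A" "\<forall>i<L. x i = z i" for x
  proof -
    have "x i \<in> U i" for i
      using that U(2) L[of i] by (cases "i < L") auto
    then show ?thesis using U(3) by (auto simp: PiE_iff)
  qed
  then show ?thesis by (intro exI[of _ L]) (auto simp: PiE_iff)
qed

lemma openin_SigmaP_top_prefix:
  assumes "openin SigmaP_top W" "z \<in> W"
  shows "\<exists>L. \<forall>x\<in>SigmaP. (\<forall>i<L. x i = z i) \<longrightarrow> x \<in> W"
proof -
  obtain T where T: "openin cantor_top T" "W = T \<inter> SigmaP"
    using assms(1) unfolding SigmaP_top_def openin_subtopology by blast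
  then obtain L where L: "\<forall>x\<in>topspace cantor_top. (\<forall>i<L. x i = z i) \<longrightarrow> x \<in> T"
    using openin_product_discrete_prefix[of "{0,1}" T z] assms(2) unfolding cantor_top_def by blast
  have "SigmaP \<subseteq> topspace cantor_top"
    using topspace_SigmaP_top unfolding SigmaP_top_def by auto
  with L T(2) show ?thesis by blast
qed

lemma openin_SigmaP_prod_prefix:
  assumes "openin (prod_topology SigmaP_top SigmaP_top) W" "(a, b) \<in> W"
  shows "\<exists>L. \<forall>x\<in>SigmaP. \<forall>y\<in>SigmaP. (\<forall>i<L. x i = a i \<and> y i = b i) \<longrightarrow> (x, y) \<in> W"
proof -
  obtain U V where UV: "openin SigmaP_top U" "openin SigmaP_top V" "a \<in> U" "b \<in> V" "U \<times> V \<subseteq> W"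
    using iffD1[OF openin_prod_topology_alt assms(1), rule_format, OF assms(2)] by blast
  obtain L1 where L1: "\<forall>x\<in>SigmaP. (\<forall>i<L1. x i = a i) \<longrightarrow> x \<in> U"
    using openin_SigmaP_top_prefix[OF UV(1,3)] by blast
  obtain L2 where L2: "\<forall>y\<in>SigmaP. (\<forall>i<L2. y i = b i) \<longrightarrow> y \<in> V"
    using openin_SigmaP_top_prefix[OF UV(2,4)] by blast
  show ?thesis
  proof (intro exI[of _ "max L1 L2"] ballI impI)
    fix x y assume "x \<in> SigmaP" "y \<in> SigmaP" "\<forall>i<max L1 L2. x i = a i \<and> y i = b i"
    with L1 L2 have "x \<in> U" "y \<in> V" by simp_all
    with UV(5) show "(x, y) \<in> W" by blast
  qed
qed

lemma openin_SigmaP_cylinder: "openin SigmaP_top {x \<in> SigmaP. x 0 = 1}"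
proof -
  have "openin cantor_top {x \<in> topspace cantor_top. x 0 \<in> {1}}"
    unfolding cantor_top_def
    by (rule openin_continuous_map_preimage[OF continuous_map_product_projection]) auto
  moreover have "{x \<in> SigmaP. x 0 = 1} = {x \<in> topspace cantor_top. x 0 \<in> {1}} \<inter> SigmaP"
    using topspace_SigmaP_top unfolding SigmaP_top_def by auto
  ultimately show ?thesis unfolding SigmaP_top_def openin_subtopology by blast
qed

definition splice :: "(nat \<Rightarrow> nat) \<Rightarrow> (nat \<Rightarrow> nat) \<Rightarrow> nat \<Rightarrow> nat \<Rightarrow> nat \<Rightarrow> nat" where
  "splice p q s L = (\<lambda>i. if i < L then p i else if s \<le> i \<and> i < s + L then q (i - s) else 0)"

lemma splice_in_SigmaP:
  assumes p: "p \<in> SigmaP" and q: "q \<in> SigmaP" and "L \<le> s"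
    and gaps: "\<And>d. s \<le> d + L \<Longrightarrow> d \<le> s + L \<Longrightarrow> d \<in> Pset"
  shows "splice p q s L \<in> SigmaP"
  unfolding mem_SigmaP_iff
proof (intro conjI allI impI)
  fix i show "splice p q s L i \<in> {0,1}"
    using p q unfolding mem_SigmaP_iff splice_def by auto
next
  fix i j assume ij: "i < j \<and> splice p q s L i = 1 \<and> splice p q s L j = 1"
  show "j - i \<in> Pset"
  proof (cases "j < L")
    case True
    then show ?thesis using ij p unfolding splice_def mem_SigmaP_iff by auto
  next
    case False
    then have j: "s \<le> j" "j < s + L" "q (j - s) = 1"
      using ij unfolding splice_def by (auto split: if_splits)
    show ?thesis
    proof (cases "i < L")
      case True
      with j show ?thesis by (intro gaps) auto
    next
      case False
      then have "s \<le> i" "q (i - s) = 1"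
        using ij unfolding splice_def by (auto split: if_splits)
      moreover from \<open>s \<le> i\<close> ij have "i - s < j - s" by arith
      ultimately have "(j - s) - (i - s) \<in> Pset"
        using SigmaP_gap[OF q] j(3) by blast
      with \<open>s \<le> i\<close> show ?thesis by simp
    qed
  qed
qed

lemma less_power_4: "n < (4::nat) ^ n"
  using less_exp[of n] power_mono[of "2::nat" 4 n] by linarith

lemma splice_in_SigmaP_at_multiple:
  assumes "p \<in> SigmaP" "q \<in> SigmaP" "10 \<le> m" "m \<le> 15"
  shows "splice p q (m * 4^L) L \<in> SigmaP"
proof (rule splice_in_SigmaP[OF assms(1,2)])
  have "L < 4^L" "10 * 4^L \<le> m * (4::nat)^L" "m * 4^L \<le> 15 * (4::nat)^L"
    using assms(3,4) less_power_4 by simp_all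
  then show "L \<le> m * 4^L" by linarith
  fix d assume "m * 4^L \<le> d + L" "d \<le> m * 4^L + L"
  with \<open>L < 4^L\<close> \<open>10 * 4^L \<le> m * 4^L\<close> \<open>m * 4^L \<le> 15 * 4^L\<close> show "d \<in> Pset"
    by (intro mem_Pset_if_bounds[of L]) linarith+
qed

lemma transitive_sys_recurrent:
  assumes "transitive_sys T g" "openin T U" "U \<noteq> {}"
  obtains n p where "n \<ge> 1" "p \<in> U" "(g ^^ n) p \<in> U"
  using assms unfolding transitive_sys_def by blast

lemma openin_SigmaP_prod_subset:
  "openin (prod_topology SigmaP_top SigmaP_top) U \<Longrightarrow> U \<subseteq> SigmaP \<times> SigmaP"
  using openin_subset[of "prod_topology SigmaP_top SigmaP_top" U] by simp

lemma transitive_shift_2_3: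
  "transitive_sys (prod_topology SigmaP_top SigmaP_top)
     (\<lambda>(x, y). ((shift ^^ 2) x, (shift ^^ 3) y))"
  unfolding transitive_sys_def
proof (intro allI impI)
  fix U V assume H: "openin (prod_topology SigmaP_top SigmaP_top) U \<and>
      openin (prod_topology SigmaP_top SigmaP_top) V \<and> U \<noteq> {} \<and> V \<noteq> {}"
  then obtain a b c d where ab: "(a, b) \<in> U" and cd: "(c, d) \<in> V" by auto
  have S: "a \<in> SigmaP" "b \<in> SigmaP" "c \<in> SigmaP" "d \<in> SigmaP"
    using ab cd H openin_SigmaP_prod_subset by blast+
  obtain L1 where L1: "\<forall>x\<in>SigmaP. \<forall>y\<in>SigmaP. (\<forall>i<L1. x i = a i \<and> y i = b i) \<longrightarrow> (x, y) \<in> U"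
    using openin_SigmaP_prod_prefix H ab by blast
  obtain L2 where L2: "\<forall>x\<in>SigmaP. \<forall>y\<in>SigmaP. (\<forall>i<L2. x i = c i \<and> y i = d i) \<longrightarrow> (x, y) \<in> V"
    using openin_SigmaP_prod_prefix H cd by blast
  define L where "L = max L1 L2"
  define N :: nat where "N = 4^L"
  define x where "x = splice a c (10 * N) L"
  define y where "y = splice b d (15 * N) L"
  have "L < N"
    unfolding N_def by (rule less_power_4)
  have xy: "x \<in> SigmaP" "y \<in> SigmaP"
    unfolding x_def y_def N_def by (simp_all add: splice_in_SigmaP_at_multiple S)
  have "(x, y) \<in> U"
  proof (rule L1[rule_format, OF xy])
    fix i assume "i < L1"
    then have "i < L" unfolding L_def by simp
    then show "x i = a i \<and> y i = b i" unfolding x_def y_def splice_def by simp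
  qed
  moreover have "((shift ^^ (2 * (5 * N))) x, (shift ^^ (3 * (5 * N))) y) \<in> V"
  proof (rule L2[rule_format])
    show "(shift ^^ (2 * (5 * N))) x \<in> SigmaP" "(shift ^^ (3 * (5 * N))) y \<in> SigmaP"
      using xy by (simp_all add: funpow_shift_in_SigmaP)
    fix i assume "i < L2"
    then have "i < L" unfolding L_def by simp
    with \<open>L < N\<close> show "(shift ^^ (2 * (5 * N))) x i = c i \<and> (shift ^^ (3 * (5 * N))) y i = d i"
      unfolding funpow_shift x_def y_def splice_def by simp
  qed
  ultimately have "(x, y) \<in> U \<inter> {p \<in> topspace (prod_topology SigmaP_top SigmaP_top).
      ((\<lambda>(x, y). ((shift ^^ 2) x, (shift ^^ 3) y)) ^^ (5 * N)) p \<in> V}"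
    using xy by (simp add: funpow_split_prod funpow_mult)
  moreover have "5 * N \<ge> 1"
    using \<open>L < N\<close> by simp
  ultimately show "\<exists>n\<ge>1. U \<inter> {p \<in> topspace (prod_topology SigmaP_top SigmaP_top).
      ((\<lambda>(x, y). ((shift ^^ 2) x, (shift ^^ 3) y)) ^^ n) p \<in> V} \<noteq> {}"
    by blast
qed

lemma not_transitive_shift_1_2:
  "\<not> transitive_sys (prod_topology SigmaP_top SigmaP_top)
     (\<lambda>(x, y). ((shift ^^ 1) x, (shift ^^ 2) y))"
proof
  assume trans: "transitive_sys (prod_topology SigmaP_top SigmaP_top)
     (\<lambda>(x, y). ((shift ^^ 1) x, (shift ^^ 2) y))"
  define C where "C = {x \<in> SigmaP. x 0 = 1}"
  have "openin (prod_topology SigmaP_top SigmaP_top) (C \<times> C)"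
    using openin_SigmaP_cylinder unfolding C_def openin_prod_Times_iff by blast
  moreover have "(\<lambda>i. if i = 0 then 1 else 0) \<in> C"
    unfolding C_def mem_SigmaP_iff by simp
  then have "C \<times> C \<noteq> {}" by blast
  ultimately obtain n x y where n: "n \<ge> 1" and "(x, y) \<in> C \<times> C"
    and "((\<lambda>(x, y). ((shift ^^ 1) x, (shift ^^ 2) y)) ^^ n) (x, y) \<in> C \<times> C"
    using transitive_sys_recurrent[OF trans] by (metis surj_pair)
  then have "(x, y) \<in> C \<times> C" "((shift ^^ (1 * n)) x, (shift ^^ (2 * n)) y) \<in> C \<times> C"
    by (simp_all only: funpow_split_prod funpow_mult case_prod_conv)
  then have "x \<in> SigmaP" "y \<in> SigmaP" "x 0 = 1" "y 0 = 1" "x n = 1" "y (2 * n) = 1"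
    by (simp_all add: C_def funpow_shift)
  with n have "n \<in> Pset" "2 * n \<in> Pset"
    using SigmaP_gap[of x 0 n] SigmaP_gap[of y 0 "2 * n"] by simp_all
  then show False using Pset_not_double by blast
qed

theorem mainTheorem6:
  shows "transitive_sys (prod_topology SigmaP_top SigmaP_top)
            (\<lambda>(x, y). ((shift ^^ 2) x, (shift ^^ 3) y))
       \<and> \<not> transitive_sys (prod_topology SigmaP_top SigmaP_top)
            (\<lambda>(x, y). ((shift ^^ 1) x, (shift ^^ 2) y))"
  using transitive_shift_2_3 not_transitive_shift_1_2 by blast

end
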